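(* Let $X$ be a real Banach lattice equipped with a sufficiently rich topology $\tau$, and let $A$ be a $\tau$-compact, convex, positive-solid subset of $X_+$. Then for every extreme point $a$ of $A$ there exists an order extreme point $b$ of $A$ with $a\le b$.
   Context: A locally convex Hausdorff topology $\tau$ on a Banach lattice $X$ is called sufficiently rich if (i) the space $X^\tau$ of $\tau$-continuous linear functionals on $X$ is a Banach lattice (with lattice operations given by the Riesz–Kantorovich formulas), and (ii) $X_+$ is $\tau$-closed. A set $A\subseteq X_+$ is positive-solid if whenever $x\in X_+$ and $x\le z$ for some $z\in A$, then $x\in A$. A point $b\in A$ is an order extreme point of $A$ if for all $x_0,x_1\in A$ and $t\in(0,1)$, $b\le(1-t)x_0+tx_1$ implies $x_0=b=x_1$. *)

theory Defs
  imports "HOL-Analysis.Analysis"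
begin

text \<open>Banach lattice: a type of sort banach, ordered_real_vector, lattice (a Riesz space
  with a complete norm) whose norm is a lattice norm. Modulus written as sup x (- x).\<close>
definition lattice_norm :: "('a::{real_normed_vector,ordered_real_vector,lattice}) itself \<Rightarrow> bool" where
  "lattice_norm _ \<longleftrightarrow> (\<forall>x y::'a. sup x (- x) \<le> sup y (- y) \<longrightarrow> norm x \<le> norm y)"

definition lc_hausdorff_topology :: "('a::real_vector) topology \<Rightarrow> bool" where
  "lc_hausdorff_topology T \<longleftrightarrow>
     topspace T = UNIV \<and> Hausdorff_space T \<and>
     continuous_map (prod_topology T T) T (\<lambda>(x, y). x + y) \<and>
     continuous_map (prod_topology euclideanreal T) T (\<lambda>(c, x). c *\<^sub>R x) \<and>
     (\<forall>U. openin T U \<and> 0 \<in> U \<longrightarrow> (\<exists>V. openin T V \<and> convex V \<and> 0 \<in> V \<and> V \<subseteq> U))"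

definition tau_dual :: "('a::real_vector) topology \<Rightarrow> ('a \<Rightarrow> real) set" where
  "tau_dual T = {f. linear f \<and> continuous_map T euclideanreal f}"

text \<open>Riesz--Kantorovich sets: (f \<or> g)(x) = sup of rk_set, (f \<and> g)(x) = inf of rk_set, x \<ge> 0.\<close>
definition rk_set :: "('a::{real_vector,ord} \<Rightarrow> real) \<Rightarrow> ('a \<Rightarrow> real) \<Rightarrow> 'a \<Rightarrow> real set" where
  "rk_set f g x = {f y + g (x - y) | y. 0 \<le> y \<and> y \<le> x}"

definition dual_norm :: "('a::real_normed_vector \<Rightarrow> real) \<Rightarrow> real" where
  "dual_norm f = Sup {\<bar>f x\<bar> | x. norm x \<le> 1}"

text \<open>Sufficiently rich topology: locally convex Hausdorff; X^tau is a Banach lattice under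
  the Riesz--Kantorovich lattice operations (closed under RK sup and inf, and complete in the
  dual norm); and X_+ is tau-closed.\<close>
definition sufficiently_rich ::
  "('a::{real_normed_vector,ordered_real_vector,lattice}) topology \<Rightarrow> bool" where
  "sufficiently_rich T \<longleftrightarrow>
     lc_hausdorff_topology T \<and>
     (\<forall>f\<in>tau_dual T. \<forall>g\<in>tau_dual T.
        (\<exists>h\<in>tau_dual T. \<forall>x. 0 \<le> x \<longrightarrow> bdd_above (rk_set f g x) \<and> h x = Sup (rk_set f g x)) \<and>
        (\<exists>h\<in>tau_dual T. \<forall>x. 0 \<le> x \<longrightarrow> bdd_below (rk_set f g x) \<and> h x = Inf (rk_set f g x))) \<and>
     (\<forall>s::nat \<Rightarrow> 'a \<Rightarrow> real. (\<forall>n. s n \<in> tau_dual T) \<and>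
        (\<forall>e>0. \<exists>N. \<forall>m\<ge>N. \<forall>n\<ge>N. dual_norm (\<lambda>x. s m x - s n x) < e) \<longrightarrow>
        (\<exists>f\<in>tau_dual T. (\<lambda>n. dual_norm (\<lambda>x. s n x - f x)) \<longlonglongrightarrow> 0)) \<and>
     closedin T {x. 0 \<le> x}"

definition positive_solid :: "('a::{real_vector,order}) set \<Rightarrow> bool" where
  "positive_solid A \<longleftrightarrow> A \<subseteq> {x. 0 \<le> x} \<and>
     (\<forall>x z. 0 \<le> x \<and> z \<in> A \<and> x \<le> z \<longrightarrow> x \<in> A)"

definition order_extreme_point :: "'a::{real_vector,order} \<Rightarrow> 'a set \<Rightarrow> bool" where
  "order_extreme_point b A \<longleftrightarrow> b \<in> A \<and>
     (\<forall>x0\<in>A. \<forall>x1\<in>A. \<forall>t::real. 0 < t \<and> t < 1 \<and> b \<le> (1 - t) *\<^sub>R x0 + t *\<^sub>R x1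
        \<longrightarrow> x0 = b \<and> x1 = b)"

end

theory Submission
  imports Defs
begin

(*
  Call a nonempty S \<subseteq> A an order face if s \<le> (1 - t) x0 + t x1 with s \<in> S, x0, x1 \<in> A and
  0 < t < 1 forces x0, x1 \<in> S; the order faces {b} are exactly the order extreme points b.
  For an extreme point a, the Riesz decomposition property and positive solidity make
  {x \<in> A. a \<le> x} a closed order face. By compactness and Zorn's lemma it contains a minimal
  closed order face S. On S every positive tau-continuous functional g is constant, since the
  set where g attains its maximum on S is again a closed order face. Every tau-continuous
  functional f is the difference of the positive functionals f \<or> 0 and f \<or> 0 - f, and these
  functionals separate points (Hahn-Banach applied to the gauge of a convex neighbourhood of 0),
  so S is a singleton {b} with a \<le> b.
*)

section \<open>Hahn--Banach for sublinear functionals\<close>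

definition sublinear :: "('a::real_vector \<Rightarrow> real) \<Rightarrow> bool" where
  "sublinear p \<longleftrightarrow> (\<forall>x y. p (x + y) \<le> p x + p y) \<and> (\<forall>c x. 0 < c \<longrightarrow> p (c *\<^sub>R x) \<le> c * p x)"

lemma sublinear_add_le: "sublinear p \<Longrightarrow> p (x + y) \<le> p x + p y"
  by (simp add: sublinear_def)

lemma sublinear_scaleR_pos:
  assumes "sublinear p" "0 < c"
  shows "p (c *\<^sub>R x) = c * p x"
proof (rule antisym)
  have hom: "\<And>d y. 0 < d \<Longrightarrow> p (d *\<^sub>R y) \<le> d * p y"
    using assms(1) by (simp add: sublinear_def)
  then show "p (c *\<^sub>R x) \<le> c * p x"
    using assms(2) .
  have "p x = p (inverse c *\<^sub>R (c *\<^sub>R x))"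
    using assms(2) by simp
  also have "\<dots> \<le> inverse c * p (c *\<^sub>R x)"
    by (rule hom) (use assms(2) in simp)
  finally show "c * p x \<le> p (c *\<^sub>R x)"
    using assms(2) by (simp add: field_simps)
qed

lemma sublinear_zero: "sublinear p \<Longrightarrow> p 0 = 0"
  using sublinear_scaleR_pos[of p 2 0] by simp

lemma sublinear_neg_le: "sublinear p \<Longrightarrow> - p x \<le> p (- x)"
  using sublinear_add_le[of p x "- x"] sublinear_zero[of p] by simp

text \<open>Partial linear functionals are represented by their graphs, so that Zorn's lemma can be
  applied to the subset order.\<close>

definition dominated_linear_graph :: "('a::real_vector \<Rightarrow> real) \<Rightarrow> ('a \<times> real) set \<Rightarrow> bool" where
  "dominated_linear_graph p G \<longleftrightarrow>
     (\<forall>x a b. (x, a) \<in> G \<longrightarrow> (x, b) \<in> G \<longrightarrow> a = b) \<and>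
     (\<forall>x a y b. (x, a) \<in> G \<longrightarrow> (y, b) \<in> G \<longrightarrow> (x + y, a + b) \<in> G) \<and>
     (\<forall>x a c. (x, a) \<in> G \<longrightarrow> (c *\<^sub>R x, c * a) \<in> G) \<and>
     (\<forall>x a. (x, a) \<in> G \<longrightarrow> a \<le> p x)"

lemma dominated_linear_graphD:
  assumes "dominated_linear_graph p G"
  shows dominated_linear_graph_unique: "(x, a) \<in> G \<Longrightarrow> (x, b) \<in> G \<Longrightarrow> a = b"
    and dominated_linear_graph_add: "(x, a) \<in> G \<Longrightarrow> (y, b) \<in> G \<Longrightarrow> (x + y, a + b) \<in> G"
    and dominated_linear_graph_scaleR: "(x, a) \<in> G \<Longrightarrow> (c *\<^sub>R x, c * a) \<in> G"
    and dominated_linear_graph_le: "(x, a) \<in> G \<Longrightarrow> a \<le> p x"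
  using assms unfolding dominated_linear_graph_def by blast+

lemma sublinear_le_on_line:
  assumes "sublinear p"
  shows "c * p x \<le> p (c *\<^sub>R x)"
proof -
  consider "0 < c" | "c = 0" | "c < 0" by linarith
  then show ?thesis
  proof cases
    case 3
    have "c * p x = (- c) * - p x" by simp
    also have "\<dots> \<le> (- c) * p (- x)"
      using 3 sublinear_neg_le[OF assms] by (intro mult_left_mono) auto
    also have "\<dots> = p (c *\<^sub>R x)"
      using 3 sublinear_scaleR_pos[OF assms, of "- c" "- x"] by simp
    finally show ?thesis .
  qed (simp_all add: assms sublinear_scaleR_pos sublinear_zero)
qed

lemma dominated_linear_graph_line:
  assumes "sublinear p"
  shows "dominated_linear_graph p (range (\<lambda>c. (c *\<^sub>R x, c * p x)))"
  unfolding dominated_linear_graph_def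
proof (intro conjI allI impI)
  fix y a b
  assume "(y, a) \<in> range (\<lambda>c. (c *\<^sub>R x, c * p x))" "(y, b) \<in> range (\<lambda>c. (c *\<^sub>R x, c * p x))"
  then obtain c d where "y = c *\<^sub>R x" "a = c * p x" "y = d *\<^sub>R x" "b = d * p x"
    by blast
  then show "a = b"
    using sublinear_zero[OF assms] by (cases "x = 0") simp_all
next
  fix y a c
  assume "(y, a) \<in> range (\<lambda>c. (c *\<^sub>R x, c * p x))"
  then show "(c *\<^sub>R y, c * a) \<in> range (\<lambda>c. (c *\<^sub>R x, c * p x))"
    by (auto intro!: image_eqI[where x = "c * _"])
next
  fix y a z b
  assume "(y, a) \<in> range (\<lambda>c. (c *\<^sub>R x, c * p x))" "(z, b) \<in> range (\<lambda>c. (c *\<^sub>R x, c * p x))"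
  then show "(y + z, a + b) \<in> range (\<lambda>c. (c *\<^sub>R x, c * p x))"
    by (auto intro!: image_eqI[where x = "_ + _"] simp: scaleR_add_left distrib_right)
next
  fix y a
  assume "(y, a) \<in> range (\<lambda>c. (c *\<^sub>R x, c * p x))"
  then show "a \<le> p y"
    using sublinear_le_on_line[OF assms] by auto
qed

lemma dominated_linear_graph_Union_chain:
  assumes "subset.chain {G. dominated_linear_graph p G} \<C>"
  shows "dominated_linear_graph p (\<Union>\<C>)"
proof -
  have graph: "dominated_linear_graph p G" if "G \<in> \<C>" for G
    using assms that by (auto simp: subset_chain_def)
  have common: "\<exists>G\<in>\<C>. u \<in> G \<and> v \<in> G" if "u \<in> \<Union>\<C>" "v \<in> \<Union>\<C>" for u v
    using assms that unfolding subset_chain_def by blast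
  show ?thesis
    unfolding dominated_linear_graph_def
  proof (intro conjI allI impI)
    fix x a b
    assume "(x, a) \<in> \<Union>\<C>" "(x, b) \<in> \<Union>\<C>"
    then show "a = b"
      using common graph dominated_linear_graph_unique by metis
  next
    fix x a y b
    assume "(x, a) \<in> \<Union>\<C>" "(y, b) \<in> \<Union>\<C>"
    then show "(x + y, a + b) \<in> \<Union>\<C>"
      using common graph dominated_linear_graph_add by (metis UnionI)
  next
    fix x a c
    assume "(x, a) \<in> \<Union>\<C>"
    then show "(c *\<^sub>R x, c * a) \<in> \<Union>\<C>"
      using graph dominated_linear_graph_scaleR by blast
  next
    fix x a
    assume "(x, a) \<in> \<Union>\<C>"
    then show "a \<le> p x"
      using graph dominated_linear_graph_le by blast
  qed
qed

lemma dominated_linear_graph_extension_value: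
  assumes "sublinear p" "dominated_linear_graph p G" "G \<noteq> {}"
  obtains w where "\<And>x a. (x, a) \<in> G \<Longrightarrow> a - p (x - y) \<le> w"
    and "\<And>z b. (z, b) \<in> G \<Longrightarrow> w \<le> p (z + y) - b"
proof -
  have key: "a - p (x - y) \<le> p (z + y) - b" if "(x, a) \<in> G" "(z, b) \<in> G" for x a z b
  proof -
    have "a + b \<le> p ((x - y) + (z + y))"
      using dominated_linear_graph_le[OF assms(2) dominated_linear_graph_add[OF assms(2) that]]
      by simp
    also have "\<dots> \<le> p (x - y) + p (z + y)"
      by (rule sublinear_add_le[OF assms(1)])
    finally show ?thesis by simp
  qed
  define L where "L = {a - p (x - y) | x a. (x, a) \<in> G}"
  have "L \<noteq> {}"
    using assms(3) unfolding L_def by auto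
  moreover have "bdd_above L"
    using assms(3) key unfolding L_def bdd_above_def by fast
  ultimately show thesis
    by (intro that[of "Sup L"] cSup_upper cSup_least) (auto simp: L_def key)
qed

lemma dominated_linear_graph_adjoin:
  assumes G: "dominated_linear_graph p G" and y: "\<forall>a. (y, a) \<notin> G"
    and dominated: "\<And>x a c. (x, a) \<in> G \<Longrightarrow> a + c * w \<le> p (x + c *\<^sub>R y)"
  shows "dominated_linear_graph p {(x + c *\<^sub>R y, a + c * w) | x a c. (x, a) \<in> G}"
    (is "dominated_linear_graph p ?G'")
  unfolding dominated_linear_graph_def
proof (intro conjI allI impI)
  fix u a b
  assume "(u, a) \<in> ?G'" "(u, b) \<in> ?G'"
  then obtain x a' c z b' d where u: "u = x + c *\<^sub>R y" "u = z + d *\<^sub>R y"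
    and ab: "a = a' + c * w" "b = b' + d * w" and xz: "(x, a') \<in> G" "(z, b') \<in> G"
    by blast
  have "c = d"
  proof (rule ccontr)
    assume "c \<noteq> d"
    have "(inverse (c - d) *\<^sub>R (z + (- 1) *\<^sub>R x), inverse (c - d) * (b' + (- 1) * a')) \<in> G"
      using G xz by (intro dominated_linear_graph_scaleR dominated_linear_graph_add)
    moreover have "z + (- 1) *\<^sub>R x = (c - d) *\<^sub>R y"
      using u by (simp add: algebra_simps)
    ultimately show False
      using y \<open>c \<noteq> d\<close> by simp
  qed
  then show "a = b"
    using u ab xz dominated_linear_graph_unique[OF G] by auto
next
  fix u a v b
  assume "(u, a) \<in> ?G'" "(v, b) \<in> ?G'"
  then obtain x a' c z b' d where "u = x + c *\<^sub>R y" "v = z + d *\<^sub>R y"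
    and "a = a' + c * w" "b = b' + d * w" and xz: "(x, a') \<in> G" "(z, b') \<in> G"
    by blast
  moreover have "(x + z + (c + d) *\<^sub>R y, a' + b' + (c + d) * w) \<in> ?G'"
    using dominated_linear_graph_add[OF G xz] by blast
  ultimately show "(u + v, a + b) \<in> ?G'"
    by (simp add: algebra_simps)
next
  fix u a e
  assume "(u, a) \<in> ?G'"
  then obtain x a' c where "u = x + c *\<^sub>R y" "a = a' + c * w" "(x, a') \<in> G"
    by blast
  moreover from this(3) have "(e *\<^sub>R x + (e * c) *\<^sub>R y, e * a' + (e * c) * w) \<in> ?G'"
    using dominated_linear_graph_scaleR[OF G] by blast
  ultimately show "(e *\<^sub>R u, e * a) \<in> ?G'"
    by (simp add: algebra_simps)
next
  fix u a
  assume "(u, a) \<in> ?G'"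
  then show "a \<le> p u"
    using dominated by blast
qed

lemma dominated_linear_graph_extend:
  assumes p: "sublinear p" and G: "dominated_linear_graph p G" "G \<noteq> {}" and y: "\<forall>a. (y, a) \<notin> G"
  shows "\<exists>G'. dominated_linear_graph p G' \<and> G \<subset> G'"
proof -
  obtain w where lower: "\<And>x a. (x, a) \<in> G \<Longrightarrow> a - p (x - y) \<le> w"
    and upper: "\<And>z b. (z, b) \<in> G \<Longrightarrow> w \<le> p (z + y) - b"
    using dominated_linear_graph_extension_value[OF p G] by blast
  let ?G' = "{(x + c *\<^sub>R y, a + c * w) | x a c. (x, a) \<in> G}"
  have "a + c * w \<le> p (x + c *\<^sub>R y)" if "(x, a) \<in> G" for x a c
  proof -
    consider "0 < c" | "c = 0" | "c < 0" by linarith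
    then show ?thesis
    proof cases
      case 1
      have "w \<le> p (inverse c *\<^sub>R x + y) - inverse c * a"
        using upper[OF dominated_linear_graph_scaleR[OF G(1) that]] .
      also have "inverse c *\<^sub>R x + y = inverse c *\<^sub>R (x + c *\<^sub>R y)"
        using 1 by (simp add: scaleR_add_right)
      also have "p \<dots> = inverse c * p (x + c *\<^sub>R y)"
        by (rule sublinear_scaleR_pos[OF p]) (use 1 in simp)
      finally show ?thesis
        using 1 by (simp add: field_simps)
    next
      case 3
      have "inverse (- c) * a - p (inverse (- c) *\<^sub>R x - y) \<le> w"
        using lower[OF dominated_linear_graph_scaleR[OF G(1) that]] .
      also have "inverse (- c) *\<^sub>R x - y = inverse (- c) *\<^sub>R (x + c *\<^sub>R y)"
        using 3 by (simp add: scaleR_add_right)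
      also have "p \<dots> = inverse (- c) * p (x + c *\<^sub>R y)"
        by (rule sublinear_scaleR_pos[OF p]) (use 3 in simp)
      finally show ?thesis
        using 3 by (simp add: field_simps)
    qed (use dominated_linear_graph_le[OF G(1) that] in simp)
  qed
  then have "dominated_linear_graph p ?G'"
    by (rule dominated_linear_graph_adjoin[OF G(1) y])
  moreover have "(0, 0) \<in> G"
    using G dominated_linear_graph_scaleR[OF G(1), where c = 0] by fastforce
  then have "(y, w) \<in> ?G'"
    by force
  moreover have "G \<subseteq> ?G'"
    by force
  ultimately show ?thesis
    using y by blast
qed

theorem Hahn_Banach_sublinear:
  assumes "sublinear p"
  shows "\<exists>f. linear f \<and> (\<forall>x. f x \<le> p x) \<and> f x0 = p x0"
proof -
  let ?\<G> = "{G. dominated_linear_graph p G \<and> (x0, p x0) \<in> G}"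
  have "\<exists>M\<in>?\<G>. \<forall>G\<in>?\<G>. M \<subseteq> G \<longrightarrow> G = M"
  proof (rule subset_Zorn_nonempty)
    have "(x0, p x0) \<in> range (\<lambda>c. (c *\<^sub>R x0, c * p x0))"
      by (rule range_eqI[of _ _ 1]) simp
    then show "?\<G> \<noteq> {}"
      using dominated_linear_graph_line[OF assms, of x0] by blast
  next
    fix \<C> assume "\<C> \<noteq> {}" and chain: "subset.chain ?\<G> \<C>"
    have "subset.chain {G. dominated_linear_graph p G} \<C>"
      using chain unfolding subset_chain_def by blast
    moreover have "(x0, p x0) \<in> \<Union>\<C>"
      using \<open>\<C> \<noteq> {}\<close> chain unfolding subset_chain_def by blast
    ultimately show "\<Union>\<C> \<in> ?\<G>"
      using dominated_linear_graph_Union_chain by blast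
  qed
  then obtain M where M: "dominated_linear_graph p M" "(x0, p x0) \<in> M"
    and maximal: "\<And>G. dominated_linear_graph p G \<Longrightarrow> M \<subseteq> G \<Longrightarrow> G = M"
    by blast
  have total: "\<exists>a. (y, a) \<in> M" for y
  proof (rule ccontr)
    assume "\<nexists>a. (y, a) \<in> M"
    then obtain G where "dominated_linear_graph p G" "M \<subset> G"
      using dominated_linear_graph_extend[OF assms M(1)] M(2) by blast
    then show False
      using maximal by blast
  qed
  define f where "f y = (THE a. (y, a) \<in> M)" for y
  have graph: "(y, a) \<in> M \<longleftrightarrow> f y = a" for y a
  proof -
    obtain b where b: "(y, b) \<in> M"
      using total by blast
    have "f y = b"
      unfolding f_def
      by (rule the_equality) (use b dominated_linear_graph_unique[OF M(1)] in blast)+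
    then show ?thesis
      using b dominated_linear_graph_unique[OF M(1)] by blast
  qed
  have "linear f"
    by (rule linearI) (use graph dominated_linear_graph_add[OF M(1)] dominated_linear_graph_scaleR[OF M(1)] in auto)
  moreover have "f x \<le> p x" for x
    using graph dominated_linear_graph_le[OF M(1)] by blast
  ultimately show ?thesis
    using graph M(2) by blast
qed

section \<open>Continuous linear functionals separate points\<close>

lemma lc_hausdorff_topology_topspace: "lc_hausdorff_topology T \<Longrightarrow> topspace T = UNIV"
  by (simp add: lc_hausdorff_topology_def)

lemma lc_continuous_map_scaleR:
  assumes "lc_hausdorff_topology T"
  shows "continuous_map T T (\<lambda>z. c *\<^sub>R z)"
proof -
  have "continuous_map T (prod_topology euclideanreal T) (\<lambda>z. (c, z))"
    by (intro continuous_map_pairedI continuous_map_id[unfolded id_def]) simp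
  then show ?thesis
    using continuous_map_compose assms unfolding lc_hausdorff_topology_def o_def by fastforce
qed

lemma lc_continuous_map_translation:
  assumes "lc_hausdorff_topology T"
  shows "continuous_map T T (\<lambda>z. z + d)"
proof -
  have "continuous_map T (prod_topology T T) (\<lambda>z. (z, d))"
    using assms by (intro continuous_map_pairedI continuous_map_id[unfolded id_def])
      (simp add: lc_hausdorff_topology_topspace)
  then show ?thesis
    using continuous_map_compose assms unfolding lc_hausdorff_topology_def o_def by fastforce
qed

lemma lc_continuous_map_ray:
  assumes "lc_hausdorff_topology T"
  shows "continuous_map euclideanreal T (\<lambda>c. c *\<^sub>R z)"
proof -
  have "continuous_map euclideanreal (prod_topology euclideanreal T) (\<lambda>c. (c, z))"
    using assms by (intro continuous_map_pairedI continuous_map_id[unfolded id_def])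
      (simp add: lc_hausdorff_topology_topspace)
  then show ?thesis
    using continuous_map_compose assms unfolding lc_hausdorff_topology_def o_def by fastforce
qed

lemma lc_openin_preimage:
  assumes "lc_hausdorff_topology T" "continuous_map T T g" "openin T U"
  shows "openin T {z. g z \<in> U}"
  using openin_continuous_map_preimage[OF assms(2,3)] assms(1)
  by (simp add: lc_hausdorff_topology_topspace)

lemma lc_symmetric_convex_nhd_avoiding:
  assumes "lc_hausdorff_topology T" "x \<noteq> 0"
  obtains W where "openin T W" "convex W" "0 \<in> W" "\<And>z. z \<in> W \<Longrightarrow> - z \<in> W" "x \<notin> W"
proof -
  obtain U U' where U: "openin T U" "openin T U'" "0 \<in> U" "x \<in> U'" "disjnt U U'"
    using assms unfolding lc_hausdorff_topology_def Hausdorff_space_def by (metis UNIV_I)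
  obtain V where V: "openin T V" "convex V" "0 \<in> V" "V \<subseteq> U"
    using assms(1) U(1,3) unfolding lc_hausdorff_topology_def by blast
  let ?W = "V \<inter> {z. (- 1) *\<^sub>R z \<in> V}"
  show thesis
  proof
    show "openin T ?W"
      using V(1) lc_openin_preimage[OF assms(1) lc_continuous_map_scaleR[OF assms(1)] V(1)] by blast
    show "convex ?W"
      using V(2) convex_linear_vimage[OF linear_scaleR V(2), of "- 1"]
      unfolding vimage_def by (intro convex_Int) simp_all
    show "x \<notin> ?W"
      using U V(4) by (auto simp: disjnt_def)
  qed (use V(3) in auto)
qed

lemma lc_nhd_absorbing:
  assumes "lc_hausdorff_topology T" "openin T W" "0 \<in> W"
  obtains c where "0 < c" "c *\<^sub>R z \<in> W"
proof -
  have "open {c::real. c *\<^sub>R z \<in> W}"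
    using openin_continuous_map_preimage[OF lc_continuous_map_ray[OF assms(1)] assms(2)] by simp
  moreover have "0 \<in> {c::real. c *\<^sub>R z \<in> W}"
    using assms(3) by simp
  ultimately obtain e where "0 < e" "ball 0 e \<subseteq> {c::real. c *\<^sub>R z \<in> W}"
    using open_contains_ball by blast
  moreover have "e / 2 \<in> ball 0 e"
    using \<open>0 < e\<close> by simp
  ultimately have "(e / 2) *\<^sub>R z \<in> W"
    by blast
  then show thesis
    by (rule that[rotated]) (use \<open>0 < e\<close> in simp)
qed

definition minkowski_gauge :: "'a::real_vector set \<Rightarrow> 'a \<Rightarrow> real" where
  "minkowski_gauge W z = Inf {r. 0 < r \<and> inverse r *\<^sub>R z \<in> W}"

context
  fixes W :: "'a::real_vector set"
  assumes convex: "convex W" and zero: "0 \<in> W" and absorbing: "\<And>z. \<exists>c>0. c *\<^sub>R z \<in> W"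
begin

private abbreviation "radii z \<equiv> {r. 0 < r \<and> inverse r *\<^sub>R z \<in> W}"

private lemma radii_nonempty: "radii z \<noteq> {}"
proof -
  obtain c where "0 < c" "c *\<^sub>R z \<in> W"
    using absorbing by blast
  then have "inverse c \<in> radii z"
    by simp
  then show ?thesis
    by blast
qed

private lemma radii_bdd_below: "bdd_below (radii z)"
  by (rule bdd_belowI[of _ 0]) simp

private lemma minkowski_gauge_le: "r \<in> radii z \<Longrightarrow> minkowski_gauge W z \<le> r"
  unfolding minkowski_gauge_def by (rule cInf_lower[OF _ radii_bdd_below])

private lemma minkowski_gauge_greatest:
  "(\<And>r. r \<in> radii z \<Longrightarrow> b \<le> r) \<Longrightarrow> b \<le> minkowski_gauge W z"
  unfolding minkowski_gauge_def by (rule cInf_greatest[OF radii_nonempty])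

lemma minkowski_gauge_le_one: "z \<in> W \<Longrightarrow> minkowski_gauge W z \<le> 1"
  by (rule minkowski_gauge_le) simp

lemma minkowski_gauge_less_one_imp_mem:
  assumes "minkowski_gauge W z < 1"
  shows "z \<in> W"
proof -
  obtain r where r: "0 < r" "inverse r *\<^sub>R z \<in> W" "r < 1"
    using assms cInf_lessD[OF radii_nonempty] unfolding minkowski_gauge_def by blast
  have "r *\<^sub>R (inverse r *\<^sub>R z) + (1 - r) *\<^sub>R 0 \<in> W"
    using r by (intro convexD[OF convex _ zero]) auto
  then show ?thesis
    using r by simp
qed

lemma sublinear_minkowski_gauge: "sublinear (minkowski_gauge W)"
  unfolding sublinear_def
proof (intro conjI allI impI)
  fix u v
  have "minkowski_gauge W (u + v) \<le> r + s" if "r \<in> radii u" "s \<in> radii v" for r s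
  proof (rule minkowski_gauge_le, safe)
    show "0 < r + s"
      using that by simp
    have "(r / (r + s)) *\<^sub>R (inverse r *\<^sub>R u) + (s / (r + s)) *\<^sub>R (inverse s *\<^sub>R v) \<in> W"
      using that by (intro convexD[OF convex]) (auto simp: add_divide_distrib[symmetric])
    moreover have "r / (r + s) * inverse r = inverse (r + s)" "s / (r + s) * inverse s = inverse (r + s)"
      using that by (simp_all add: inverse_eq_divide)
    ultimately show "inverse (r + s) *\<^sub>R (u + v) \<in> W"
      by (simp only: scaleR_scaleR scaleR_add_right)
  qed
  then have "minkowski_gauge W (u + v) - s \<le> minkowski_gauge W u" if "s \<in> radii v" for s
    using that by (intro minkowski_gauge_greatest) (simp add: algebra_simps)
  then have "minkowski_gauge W (u + v) - minkowski_gauge W u \<le> minkowski_gauge W v"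
    by (intro minkowski_gauge_greatest) (simp add: algebra_simps)
  then show "minkowski_gauge W (u + v) \<le> minkowski_gauge W u + minkowski_gauge W v"
    by simp
next
  fix c :: real and z
  assume "0 < c"
  have "minkowski_gauge W (c *\<^sub>R z) \<le> c * r" if "r \<in> radii z" for r
  proof (rule minkowski_gauge_le)
    have rescale: "inverse (c * r) *\<^sub>R (c *\<^sub>R z) = inverse r *\<^sub>R z"
      using \<open>0 < c\<close> by simp
    show "c * r \<in> radii (c *\<^sub>R z)"
      unfolding mem_Collect_eq rescale using that \<open>0 < c\<close> by simp
  qed
  then have "minkowski_gauge W (c *\<^sub>R z) / c \<le> minkowski_gauge W z"
    using \<open>0 < c\<close> by (intro minkowski_gauge_greatest) (simp add: field_simps)
  then show "minkowski_gauge W (c *\<^sub>R z) \<le> c * minkowski_gauge W z"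
    using \<open>0 < c\<close> by (simp add: field_simps)
qed

end

lemma lc_continuous_map_linear_bounded_on_nhd:
  assumes lc: "lc_hausdorff_topology T" and f: "linear f"
    and W: "openin T W" "0 \<in> W" "\<And>z. z \<in> W \<Longrightarrow> \<bar>f z\<bar> \<le> 1"
  shows "continuous_map T euclideanreal f"
proof -
  have "openin T {u. f u \<in> U}" if "open U" for U
  proof (subst openin_subopen, safe)
    fix z0
    assume "f z0 \<in> U"
    then obtain e where "0 < e" "ball (f z0) e \<subseteq> U"
      using \<open>open U\<close> open_contains_ball by blast
    let ?N = "{u. (2 / e) *\<^sub>R (u + - z0) \<in> W}"
    have "continuous_map T T (\<lambda>u. (2 / e) *\<^sub>R (u + - z0))"
      using continuous_map_compose[OF lc_continuous_map_translation lc_continuous_map_scaleR] lc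
      unfolding o_def by blast
    then have "openin T ?N"
      by (rule lc_openin_preimage[OF lc _ W(1)])
    moreover have "?N \<subseteq> {u. f u \<in> U}"
    proof safe
      fix u
      assume "(2 / e) *\<^sub>R (u + - z0) \<in> W"
      then have "\<bar>f ((2 / e) *\<^sub>R (u + - z0))\<bar> \<le> 1"
        by (rule W(3))
      moreover have "f ((2 / e) *\<^sub>R (u + - z0)) = (2 / e) * (f u - f z0)"
        using f by (simp add: linear_scale linear_diff diff_divide_distrib)
      ultimately have "\<bar>(2 / e) * (f u - f z0)\<bar> \<le> 1"
        by simp
      then have "dist (f z0) (f u) < e"
        using \<open>0 < e\<close> by (simp add: dist_real_def abs_mult abs_minus_commute field_simps)
      then show "f u \<in> U"
        using \<open>ball (f z0) e \<subseteq> U\<close> by auto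
    qed
    ultimately show "\<exists>N. openin T N \<and> z0 \<in> N \<and> N \<subseteq> {u. f u \<in> U}"
      using W(2) by auto
  qed
  then show ?thesis
    using lc by (simp add: continuous_map_def lc_hausdorff_topology_topspace)
qed

theorem tau_dual_separates_points:
  assumes lc: "lc_hausdorff_topology T" and "x \<noteq> 0"
  shows "\<exists>f\<in>tau_dual T. f x \<noteq> 0"
proof -
  obtain W where W: "openin T W" "convex W" "0 \<in> W" "\<And>z. z \<in> W \<Longrightarrow> - z \<in> W" "x \<notin> W"
    using lc_symmetric_convex_nhd_avoiding[OF assms] by blast
  have absorbing: "\<exists>c>0. c *\<^sub>R z \<in> W" for z
    using lc_nhd_absorbing[OF lc W(1,3)] by metis
  obtain f where f: "linear f" "\<And>z. f z \<le> minkowski_gauge W z" "f x = minkowski_gauge W x"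
    using Hahn_Banach_sublinear[OF sublinear_minkowski_gauge[OF W(2,3) absorbing]] by blast
  have "\<bar>f z\<bar> \<le> 1" if "z \<in> W" for z
  proof -
    have "f z \<le> 1" "f (- z) \<le> 1"
      using f(2) minkowski_gauge_le_one[OF W(2,3) absorbing] that W(4) by (meson order_trans)+
    then show ?thesis
      using linear_neg[OF f(1), of z] by simp
  qed
  then have "f \<in> tau_dual T"
    unfolding tau_dual_def using lc_continuous_map_linear_bounded_on_nhd[OF lc f(1) W(1,3)] f(1) by blast
  moreover have "f x \<noteq> 0"
    using f(3) minkowski_gauge_less_one_imp_mem[OF W(2,3) absorbing] W(5) by force
  ultimately show ?thesis
    by blast
qed

section \<open>Order faces\<close>

lemma inf_add_left_le:
  fixes c x y :: "'a::{ordered_ab_group_add,lattice}"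
  shows "inf (c + x) (c + y) \<le> c + inf x y"
proof -
  have "inf (c + x) (c + y) - c \<le> inf x y"
    by (simp add: diff_le_eq add.commute)
  then show ?thesis
    by (metis diff_le_eq add.commute)
qed

lemma riesz_decomposition:
  fixes a p q :: "'a::{ordered_ab_group_add,lattice}"
  assumes "0 \<le> a" "a \<le> p + q" "0 \<le> p" "0 \<le> q"
  obtains u v where "0 \<le> u" "u \<le> p" "0 \<le> v" "v \<le> q" "a = u + v"
proof
  have "a \<le> inf (q + a) (q + p)"
    using assms by (simp add: add.commute add_increasing)
  also have "\<dots> \<le> q + inf a p"
    by (rule inf_add_left_le)
  finally show "a - inf a p \<le> q"
    by (simp add: diff_le_eq)
qed (use assms in simp_all)

lemma extreme_point_of_convex_combination:
  assumes "a extreme_point_of A" "y \<in> A" "z \<in> A" "0 < t" "t < 1" "a = (1 - t) *\<^sub>R y + t *\<^sub>R z"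
  shows "y = a \<and> z = a"
proof (cases "y = z")
  case True
  then show ?thesis
    using assms(6) by (simp add: scaleR_left_diff_distrib[symmetric] algebra_simps)
next
  case False
  then have "a \<in> open_segment y z"
    using assms(4-6) unfolding in_segment by blast
  then show ?thesis
    using assms(1-3) unfolding extreme_point_of_def by blast
qed

lemma convex_combination_ge_upper_bound:
  fixes t a b m :: real
  assumes "0 < t" "t < 1" "m \<le> (1 - t) * a + t * b" "a \<le> m" "b \<le> m"
  shows "a = m" "b = m"
proof -
  have "(1 - t) * (m - a) + t * (m - b) \<le> 0"
    using assms(3) by (simp add: algebra_simps)
  moreover have "0 \<le> (1 - t) * (m - a)" "0 \<le> t * (m - b)"
    using assms by simp_all
  ultimately have "(1 - t) * (m - a) = 0" "t * (m - b) = 0"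
    by linarith+
  then show "a = m" "b = m"
    using assms(1,2) by simp_all
qed

text \<open>The Riesz decomposition splits a along the convex combination; solidity puts the rescaled
  pieces into A, where extremality forces both to equal a.\<close>

lemma extreme_point_le_convex_combination:
  fixes A :: "'a::{ordered_real_vector,lattice} set"
  assumes solid: "positive_solid A" and extreme: "a extreme_point_of A"
    and x: "x0 \<in> A" "x1 \<in> A" and t: "0 < t" "t < 1"
    and le: "a \<le> (1 - t) *\<^sub>R x0 + t *\<^sub>R x1"
  shows "a \<le> x0 \<and> a \<le> x1"
proof -
  have pos: "0 \<le> z" if "z \<in> A" for z
    using solid that unfolding positive_solid_def by blast
  have "a \<in> A"
    using extreme by (simp add: extreme_point_of_def)
  have "0 \<le> (1 - t) *\<^sub>R x0" "0 \<le> t *\<^sub>R x1"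
    using pos[OF x(1)] pos[OF x(2)] t by (auto intro: scaleR_nonneg_nonneg)
  then obtain u v where uv: "0 \<le> u" "u \<le> (1 - t) *\<^sub>R x0" "0 \<le> v" "v \<le> t *\<^sub>R x1" "a = u + v"
    using riesz_decomposition[OF pos[OF \<open>a \<in> A\<close>] le] by blast
  define u0 v1 where "u0 = inverse (1 - t) *\<^sub>R u" and "v1 = inverse t *\<^sub>R v"
  have "u0 \<le> x0" "v1 \<le> x1"
    using scaleR_left_mono[OF uv(2), of "inverse (1 - t)"] scaleR_left_mono[OF uv(4), of "inverse t"] t
    by (simp_all add: u0_def v1_def)
  moreover have "0 \<le> u0" "0 \<le> v1"
    using uv t by (auto simp: u0_def v1_def intro!: scaleR_nonneg_nonneg)
  ultimately have "u0 \<in> A" "v1 \<in> A"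
    using solid x unfolding positive_solid_def by blast+
  moreover have "a = (1 - t) *\<^sub>R u0 + t *\<^sub>R v1"
    using uv(5) t by (simp add: u0_def v1_def)
  ultimately have "u0 = a" "v1 = a"
    using extreme_point_of_convex_combination[OF extreme _ _ t] by blast+
  then show ?thesis
    using \<open>u0 \<le> x0\<close> \<open>v1 \<le> x1\<close> by simp
qed

definition order_face :: "'a::{real_vector,order} set \<Rightarrow> 'a set \<Rightarrow> bool" where
  "order_face A S \<longleftrightarrow> S \<noteq> {} \<and> S \<subseteq> A \<and>
     (\<forall>s\<in>S. \<forall>x0\<in>A. \<forall>x1\<in>A. \<forall>t::real. 0 < t \<and> t < 1 \<and> s \<le> (1 - t) *\<^sub>R x0 + t *\<^sub>R x1
        \<longrightarrow> x0 \<in> S \<and> x1 \<in> S)"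

lemma order_faceI:
  assumes "S \<noteq> {}" "S \<subseteq> A"
    and "\<And>s x0 x1 t. s \<in> S \<Longrightarrow> x0 \<in> A \<Longrightarrow> x1 \<in> A \<Longrightarrow> 0 < t \<Longrightarrow> t < 1 \<Longrightarrow>
      s \<le> (1 - t) *\<^sub>R x0 + t *\<^sub>R x1 \<Longrightarrow> x0 \<in> S \<and> x1 \<in> S"
  shows "order_face A S"
  using assms unfolding order_face_def by blast

lemma order_faceD:
  assumes "order_face A S"
  shows "S \<noteq> {}" "S \<subseteq> A"
    and "s \<in> S \<Longrightarrow> x0 \<in> A \<Longrightarrow> x1 \<in> A \<Longrightarrow> 0 < t \<Longrightarrow> t < 1 \<Longrightarrow>
      s \<le> (1 - t) *\<^sub>R x0 + t *\<^sub>R x1 \<Longrightarrow> x0 \<in> S \<and> x1 \<in> S"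
  using assms unfolding order_face_def by blast+

lemma order_face_singleton_iff: "order_face A {b} \<longleftrightarrow> order_extreme_point b A"
  unfolding order_face_def order_extreme_point_def by blast

lemma order_face_upper_set:
  fixes A :: "'a::{ordered_real_vector,lattice} set"
  assumes "positive_solid A" "a extreme_point_of A"
  shows "order_face A {x \<in> A. a \<le> x}"
proof (rule order_faceI)
  show "{x \<in> A. a \<le> x} \<noteq> {}"
    using assms(2) by (auto simp: extreme_point_of_def)
next
  fix s x0 x1 and t :: real
  assume "s \<in> {x \<in> A. a \<le> x}" "x0 \<in> A" "x1 \<in> A" "0 < t" "t < 1"
    and "s \<le> (1 - t) *\<^sub>R x0 + t *\<^sub>R x1"
  then show "x0 \<in> {x \<in> A. a \<le> x} \<and> x1 \<in> {x \<in> A. a \<le> x}"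
    using extreme_point_le_convex_combination[OF assms, of x0 x1 t] by auto
qed auto

lemma order_face_Inter:
  assumes "\<S> \<noteq> {}" "\<And>S. S \<in> \<S> \<Longrightarrow> order_face A S" "\<Inter>\<S> \<noteq> {}"
  shows "order_face A (\<Inter>\<S>)"
proof (rule order_faceI)
  show "\<Inter>\<S> \<subseteq> A"
    using assms(1,2) order_faceD(2) by blast
next
  fix s x0 x1 and t :: real
  assume s: "s \<in> \<Inter>\<S>" and comb: "x0 \<in> A" "x1 \<in> A" "0 < t" "t < 1"
    "s \<le> (1 - t) *\<^sub>R x0 + t *\<^sub>R x1"
  have "x0 \<in> S \<and> x1 \<in> S" if "S \<in> \<S>" for S
    using order_faceD(3)[OF assms(2)[OF that] InterD[OF s that] comb] .
  then show "x0 \<in> \<Inter>\<S> \<and> x1 \<in> \<Inter>\<S>"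
    by blast
qed (rule assms(3))

lemma order_face_argmax:
  fixes A :: "'a::ordered_real_vector set" and g :: "'a \<Rightarrow> real"
  assumes face: "order_face A S" and g: "linear g" "\<And>y. 0 \<le> y \<Longrightarrow> 0 \<le> g y"
    and max: "m \<in> g ` S" "\<And>s. s \<in> S \<Longrightarrow> g s \<le> m"
  shows "order_face A {s \<in> S. g s = m}"
proof (rule order_faceI)
  fix s x0 x1 and t :: real
  assume s: "s \<in> {s \<in> S. g s = m}" and x: "x0 \<in> A" "x1 \<in> A" and t: "0 < t" "t < 1"
    and comb: "s \<le> (1 - t) *\<^sub>R x0 + t *\<^sub>R x1"
  have "x0 \<in> S" "x1 \<in> S"
    using order_faceD(3)[OF face _ x t comb] s by blast+
  have "0 \<le> g ((1 - t) *\<^sub>R x0 + t *\<^sub>R x1 - s)"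
    using comb by (intro g(2)) (simp add: le_diff_eq)
  then have "m \<le> (1 - t) * g x0 + t * g x1"
    using g(1) s by (simp add: linear_diff linear_add linear_scale)
  then have "g x0 = m" "g x1 = m"
    using convex_combination_ge_upper_bound[OF t] max(2)[OF \<open>x0 \<in> S\<close>] max(2)[OF \<open>x1 \<in> S\<close>]
    by simp_all
  then show "x0 \<in> {s \<in> S. g s = m} \<and> x1 \<in> {s \<in> S. g s = m}"
    using \<open>x0 \<in> S\<close> \<open>x1 \<in> S\<close> by simp
qed (use order_faceD(2)[OF face] max(1) in auto)

text \<open>Zorn's lemma for minimal elements, obtained by passing to complements.\<close>

lemma subset_Zorn_nonempty_Inter:
  assumes "\<F> \<noteq> {}" and chain: "\<And>\<C>. \<C> \<noteq> {} \<Longrightarrow> subset.chain \<F> \<C> \<Longrightarrow> \<Inter>\<C> \<in> \<F>"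
  shows "\<exists>M\<in>\<F>. \<forall>X\<in>\<F>. X \<subseteq> M \<longrightarrow> X = M"
proof -
  have "\<exists>M\<in>uminus ` \<F>. \<forall>X\<in>uminus ` \<F>. M \<subseteq> X \<longrightarrow> X = M"
  proof (rule subset_Zorn_nonempty)
    show "uminus ` \<F> \<noteq> {}"
      using assms(1) by blast
  next
    fix \<C> assume "\<C> \<noteq> {}" "subset.chain (uminus ` \<F>) \<C>"
    then have "uminus ` \<C> \<noteq> {}" "subset.chain \<F> (uminus ` \<C>)"
      unfolding subset_chain_def by (auto simp: image_iff)
    then have "\<Inter>(uminus ` \<C>) \<in> \<F>"
      by (rule chain)
    then show "\<Union>\<C> \<in> uminus ` \<F>"
      by (auto intro: image_eqI[where x = "\<Inter>(uminus ` \<C>)"])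
  qed
  then show ?thesis
    by (metis (no_types, lifting) Compl_subset_Compl_iff double_compl image_iff)
qed

lemma compactin_Inter_chain_nonempty:
  assumes "compactin T A" "\<C> \<noteq> {}" "subset.chain UNIV \<C>"
    and "\<And>S. S \<in> \<C> \<Longrightarrow> closedin T S \<and> S \<noteq> {} \<and> S \<subseteq> A"
  shows "\<Inter>\<C> \<noteq> {}"
proof -
  have "A \<inter> \<Inter>\<C> \<noteq> {}"
  proof (rule compactin_fip[THEN iffD1, OF assms(1), THEN conjunct2, rule_format], safe)
    show "closedin T S" if "S \<in> \<C>" for S
      using assms(4) that by blast
  next
    fix \<F>
    assume "finite \<F>" "\<F> \<subseteq> \<C>" "A \<inter> \<Inter>\<F> = {}"
    show False
    proof (cases "\<F> = {}")
      case True
      obtain S where "S \<in> \<C>"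
        using assms(2) by blast
      then show False
        using assms(4) \<open>A \<inter> \<Inter>\<F> = {}\<close> True by blast
    next
      case False
      have "subset.chain UNIV \<F>"
        using assms(3) \<open>\<F> \<subseteq> \<C>\<close> by (auto simp: subset_chain_def)
      then have "\<Inter>\<F> \<in> \<C>"
        using Inter_in_chain[OF \<open>finite \<F>\<close> False] \<open>\<F> \<subseteq> \<C>\<close> by blast
      then show False
        using assms(4) \<open>A \<inter> \<Inter>\<F> = {}\<close> by (metis Int_absorb1)
    qed
  qed
  then show ?thesis
    by blast
qed

definition minimal_closed_order_face :: "'a::{real_vector,order} topology \<Rightarrow> 'a set \<Rightarrow> 'a set \<Rightarrow> bool" where
  "minimal_closed_order_face T A S \<longleftrightarrow> order_face A S \<and> closedin T S \<and>
     (\<forall>S'. order_face A S' \<and> closedin T S' \<and> S' \<subseteq> S \<longrightarrow> S' = S)"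

lemma exists_minimal_closed_order_face:
  assumes "compactin T A" "order_face A S0" "closedin T S0"
  obtains S where "minimal_closed_order_face T A S" "S \<subseteq> S0"
proof -
  let ?\<F> = "{S. order_face A S \<and> closedin T S \<and> S \<subseteq> S0}"
  have "\<exists>M\<in>?\<F>. \<forall>S\<in>?\<F>. S \<subseteq> M \<longrightarrow> S = M"
  proof (rule subset_Zorn_nonempty_Inter)
    show "?\<F> \<noteq> {}"
      using assms(2,3) by blast
  next
    fix \<C> assume "\<C> \<noteq> {}" and chain: "subset.chain ?\<F> \<C>"
    then have faces: "order_face A S" "closedin T S" "S \<subseteq> S0" if "S \<in> \<C>" for S
      using that by (auto simp: subset_chain_def)
    have "\<Inter>\<C> \<noteq> {}"
    proof (rule compactin_Inter_chain_nonempty[OF assms(1) \<open>\<C> \<noteq> {}\<close>])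
      show "subset.chain UNIV \<C>"
        using chain by (auto simp: subset_chain_def)
      show "closedin T S \<and> S \<noteq> {} \<and> S \<subseteq> A" if "S \<in> \<C>" for S
        using faces[OF that] order_faceD(1,2) by blast
    qed
    moreover have "closedin T (\<Inter>\<C>)"
      using \<open>\<C> \<noteq> {}\<close> faces(2) by (intro closedin_Inter) auto
    moreover have "\<Inter>\<C> \<subseteq> S0"
      using \<open>\<C> \<noteq> {}\<close> faces(3) by blast
    ultimately show "\<Inter>\<C> \<in> ?\<F>"
      using order_face_Inter[OF \<open>\<C> \<noteq> {}\<close> faces(1)] by blast
  qed
  then obtain S where S: "S \<in> ?\<F>" and minimal: "\<forall>S'\<in>?\<F>. S' \<subseteq> S \<longrightarrow> S' = S" ..
  have "minimal_closed_order_face T A S"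
    unfolding minimal_closed_order_face_def
  proof (intro conjI allI impI)
    fix S'
    assume S': "order_face A S' \<and> closedin T S' \<and> S' \<subseteq> S"
    then have "S' \<in> ?\<F>"
      using S by auto
    then show "S' = S"
      using minimal S' by blast
  qed (use S in auto)
  then show thesis
    using S by (intro that) auto
qed


section \<open>Minimal closed order faces are singletons\<close>

lemma sufficiently_rich_lc_hausdorff: "sufficiently_rich T \<Longrightarrow> lc_hausdorff_topology T"
  by (simp add: sufficiently_rich_def)

lemma sufficiently_rich_closedin_atLeast:
  assumes "sufficiently_rich T"
  shows "closedin T {x. a \<le> x}"
proof -
  have lc: "lc_hausdorff_topology T"
    using assms by (rule sufficiently_rich_lc_hausdorff)
  have "closedin T {x \<in> topspace T. x + - a \<in> {x. 0 \<le> x}}"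
    using assms unfolding sufficiently_rich_def
    by (intro closedin_continuous_map_preimage[OF lc_continuous_map_translation[OF lc]]) blast
  then show ?thesis
    using lc by (simp add: lc_hausdorff_topology_topspace le_diff_eq)
qed

lemma tau_dual_diff: "f \<in> tau_dual T \<Longrightarrow> g \<in> tau_dual T \<Longrightarrow> (\<lambda>x. f x - g x) \<in> tau_dual T"
  unfolding tau_dual_def by (auto intro: linear_compose_sub continuous_map_diff)

text \<open>The majorant is the Riesz--Kantorovich supremum of f and 0.\<close>

lemma tau_dual_positive_majorant:
  assumes "sufficiently_rich T" "f \<in> tau_dual T"
  obtains h where "h \<in> tau_dual T" "\<And>y. 0 \<le> y \<Longrightarrow> 0 \<le> h y" "\<And>y. 0 \<le> y \<Longrightarrow> f y \<le> h y"
proof -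
  have "(\<lambda>_. 0) \<in> tau_dual T"
    by (simp add: tau_dual_def linear_zero)
  then obtain h where h: "h \<in> tau_dual T"
    and sup: "\<And>x. 0 \<le> x \<Longrightarrow> bdd_above (rk_set f (\<lambda>_. 0) x) \<and> h x = Sup (rk_set f (\<lambda>_. 0) x)"
    using assms unfolding sufficiently_rich_def by meson
  have "f y \<le> h x" if "0 \<le> y" "y \<le> x" for x y
  proof -
    have "f y \<in> rk_set f (\<lambda>_. 0) x"
      unfolding rk_set_def using that by auto
    then show ?thesis
      using sup[OF order.trans[OF that]] cSup_upper by metis
  qed
  moreover have "f 0 = 0"
    using assms(2) by (simp add: tau_dual_def linear_0)
  ultimately show thesis
    using that[OF h] by (metis order_refl)
qed

lemma minimal_closed_order_face_functional_const:
  fixes A :: "'a::ordered_real_vector set"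
  assumes "compactin T A" "minimal_closed_order_face T A S"
    and g: "g \<in> tau_dual T" "\<And>y. 0 \<le> y \<Longrightarrow> 0 \<le> g y" and "s1 \<in> S" "s2 \<in> S"
  shows "g s1 = g s2"
proof -
  have face: "order_face A S" and closed: "closedin T S"
    and minimal: "\<And>S'. order_face A S' \<Longrightarrow> closedin T S' \<Longrightarrow> S' \<subseteq> S \<Longrightarrow> S' = S"
    using assms(2) unfolding minimal_closed_order_face_def by blast+
  have cont: "continuous_map T euclideanreal g"
    using g(1) by (simp add: tau_dual_def)
  have "compactin T S"
    using closed_compactin[OF assms(1) order_faceD(2)[OF face] closed] .
  then have "compact (g ` S)"
    using image_compactin[OF _ cont] by simp
  then obtain m where m: "m \<in> g ` S" "\<And>s. s \<in> S \<Longrightarrow> g s \<le> m"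
    using compact_attains_sup[of "g ` S"] order_faceD(1)[OF face] by blast
  have "closedin T {x \<in> topspace T. g x \<in> {m}}"
    by (rule closedin_continuous_map_preimage[OF cont]) simp
  moreover have "{s \<in> S. g s = m} = S \<inter> {x \<in> topspace T. g x \<in> {m}}"
    using closedin_subset[OF closed] by auto
  ultimately have "closedin T {s \<in> S. g s = m}"
    using closedin_Int[OF closed] by simp
  moreover have "order_face A {s \<in> S. g s = m}"
    using face g m by (intro order_face_argmax) (simp_all add: tau_dual_def)
  ultimately have "{s \<in> S. g s = m} = S"
    using minimal by blast
  then have "g s1 = m" "g s2 = m"
    using assms(5,6) by (auto simp: set_eq_iff)
  then show ?thesis
    by simp
qed

lemma minimal_closed_order_face_singleton:
  fixes A :: "'a::{real_normed_vector,ordered_real_vector,lattice} set"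
  assumes rich: "sufficiently_rich T" and "compactin T A" and min: "minimal_closed_order_face T A S"
  obtains b where "S = {b}"
proof -
  have const: "f s1 = f s2" if f: "f \<in> tau_dual T" and s: "s1 \<in> S" "s2 \<in> S" for f s1 s2
  proof -
    obtain h where h: "h \<in> tau_dual T" "\<And>y. 0 \<le> y \<Longrightarrow> 0 \<le> h y" "\<And>y. 0 \<le> y \<Longrightarrow> f y \<le> h y"
      using tau_dual_positive_majorant[OF rich f] by blast
    have "h s1 = h s2"
      using minimal_closed_order_face_functional_const[OF assms(2) min h(1,2) s] .
    moreover have "h s1 - f s1 = h s2 - f s2"
      using minimal_closed_order_face_functional_const[OF assms(2) min tau_dual_diff[OF h(1) f] _ s] h(3)
      by simp
    ultimately show ?thesis
      by simp
  qed
  have "s1 = s2" if "s1 \<in> S" "s2 \<in> S" for s1 s2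
  proof (rule ccontr)
    assume "s1 \<noteq> s2"
    then obtain f where f: "f \<in> tau_dual T" "f (s1 - s2) \<noteq> 0"
      using tau_dual_separates_points[OF sufficiently_rich_lc_hausdorff[OF rich]] by force
    then have "f s1 \<noteq> f s2"
      by (simp add: tau_dual_def linear_diff)
    then show False
      using const[OF f(1) that] by simp
  qed
  moreover have "S \<noteq> {}"
    using min order_faceD(1) unfolding minimal_closed_order_face_def by blast
  ultimately show thesis
    using that by blast
qed

theorem mainTheorem12:
  fixes T :: "('a::{banach,ordered_real_vector,lattice}) topology"
    and A :: "'a set"
    and a :: 'a
  assumes "lattice_norm TYPE('a)"
    and "sufficiently_rich T"
    and "compactin T A"
    and "convex A"
    and "positive_solid A"
    and "a extreme_point_of A"
  shows "\<exists>b. order_extreme_point b A \<and> a \<le> b"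
proof -
  have "Hausdorff_space T"
    using sufficiently_rich_lc_hausdorff[OF assms(2)] by (simp add: lc_hausdorff_topology_def)
  then have "closedin T (A \<inter> {x. a \<le> x})"
    using compactin_imp_closedin[OF _ assms(3)] sufficiently_rich_closedin_atLeast[OF assms(2)] by blast
  moreover have "order_face A {x \<in> A. a \<le> x}"
    using order_face_upper_set[OF assms(5,6)] .
  ultimately obtain S where S: "minimal_closed_order_face T A S" "S \<subseteq> {x \<in> A. a \<le> x}"
    using exists_minimal_closed_order_face[OF assms(3)] by (metis Collect_conj_eq Collect_mem_eq)
  obtain b where "S = {b}"
    using minimal_closed_order_face_singleton[OF assms(2,3) S(1)] .
  then have "order_extreme_point b A" "a \<le> b"
    using S order_face_singleton_iff unfolding minimal_closed_order_face_def by auto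
  then show ?thesis
    by blast
qed

end
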